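(* Let $G=(V,E)$ be a simple undirected graph with node features $x_v\in\mathbb{R}$, $v\in V$, and consider the message passing neural network defined by $h_v^{(0)}=x_v$ and, for $\ell\ge 0$, $$h_v^{(\ell+1)}=\phi_\ell\Big(h_v^{(\ell)},\ \sum_{u\in V}\hat a_{vu}\,\psi_\ell\big(h_v^{(\ell)},h_u^{(\ell)}\big)\Big),$$ where $\phi_\ell,\psi_\ell:\mathbb{R}^2\to\mathbb{R}$ are differentiable. Let $i,s\in V$ with $s\in S_{r+1}(i)$ for some integer $r\ge 0$. If $|\nabla\phi_\ell|\le\alpha$ and $|\nabla\psi_\ell|\le\beta$ (i.e. all partial derivatives are bounded in absolute value by $\alpha$, resp. $\beta$) for all $0\le\ell\le r$, then $$\left|\frac{\partial h_i^{(r+1)}}{\partial x_s}\right|\le(\alpha\beta)^{r+1}\big(\hat A^{r+1}\big)_{is}.$$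
   Context: $A$ is the adjacency matrix of $G$, $D$ the diagonal degree matrix, and $\hat A=(\hat a_{uv})=(D+I)^{-1/2}(A+I)(D+I)^{-1/2}$ is the normalized augmented adjacency matrix. $d_G$ is the shortest-path distance and $S_r(i)=\{v\in V: d_G(i,v)=r\}$. *)

theory Defs
  imports "HOL-Analysis.Analysis"
begin

text \<open>Simple undirected graph on a finite vertex type 'v, given by an edge relation E
  (assumed symmetric and irreflexive in the theorem).\<close>

definition degree :: "('v::finite \<Rightarrow> 'v \<Rightarrow> bool) \<Rightarrow> 'v \<Rightarrow> nat" where
  "degree E v = card {u. E v u}"

text \<open>Normalized augmented adjacency matrix (D+I)^(-1/2) (A+I) (D+I)^(-1/2).\<close>
definition adj_hat :: "('v::finite \<Rightarrow> 'v \<Rightarrow> bool) \<Rightarrow> real^'v^'v" where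
  "adj_hat E = (\<chi> u v. ((if E u v then 1 else 0) + (if u = v then 1 else 0))
       / (sqrt (real (degree E u) + 1) * sqrt (real (degree E v) + 1)))"

definition matpow :: "real^'n^'n \<Rightarrow> nat \<Rightarrow> real^'n^'n" where
  "matpow M n = (((**) M) ^^ n) (mat 1)"

fun walk :: "('v \<Rightarrow> 'v \<Rightarrow> bool) \<Rightarrow> nat \<Rightarrow> 'v \<Rightarrow> 'v \<Rightarrow> bool" where
  "walk E 0 u v = (u = v)"
| "walk E (Suc n) u v = (\<exists>w. E u w \<and> walk E n w v)"

definition sphere_G :: "('v \<Rightarrow> 'v \<Rightarrow> bool) \<Rightarrow> nat \<Rightarrow> 'v \<Rightarrow> 'v set" where
  "sphere_G E r i = {v. (\<exists>n. walk E n i v) \<and> (LEAST n. walk E n i v) = r}"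

fun mpnn :: "(nat \<Rightarrow> real \<Rightarrow> real \<Rightarrow> real) \<Rightarrow> (nat \<Rightarrow> real \<Rightarrow> real \<Rightarrow> real)
    \<Rightarrow> real^'v^'v \<Rightarrow> nat \<Rightarrow> ('v::finite \<Rightarrow> real) \<Rightarrow> 'v \<Rightarrow> real" where
  "mpnn phi psi M 0 x v = x v"
| "mpnn phi psi M (Suc l) x v =
     phi l (mpnn phi psi M l x v)
       (\<Sum>u\<in>UNIV. M $ v $ u * psi l (mpnn phi psi M l x v) (mpnn phi psi M l x u))"

end

theory Submission
  imports Defs
begin

(* Perturbing x_s can change h_v^(l) only if some walk of length at most l joins v to s, since
   ahat_vu vanishes unless u = v or u is adjacent to v.  By the chain rule d h_v^(l+1) / d x_s
   combines d h_v^(l) / d x_s with the terms ahat_vu * d h_u^(l) / d x_s.  When v is at distance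
   greater than l from s the former vanish, so only the second partial derivatives of phi and psi
   enter, and induction on l bounds the rest by (alpha beta)^l (Ahat^l)_vs, using ahat_vu >= 0. *)

lemma matpow_Suc: "matpow M (Suc n) = M ** matpow M n"
  by (simp add: matpow_def)

lemma adj_hat_nonneg: "0 \<le> adj_hat E $ u $ v"
  by (simp add: adj_hat_def)

lemma adj_hat_nonzero_imp_adjacent_or_eq: "adj_hat E $ u $ v \<noteq> 0 \<Longrightarrow> E u v \<or> v = u"
  by (auto simp: adj_hat_def split: if_splits)

lemma sphere_G_imp_not_walk:
  "v \<in> sphere_G E r i \<Longrightarrow> n < r \<Longrightarrow> \<not> walk E n i v"
  unfolding sphere_G_def by (auto dest: not_less_Least)

lemma has_derivative_imp_partial_derivs:
  fixes f :: "real \<Rightarrow> real \<Rightarrow> real"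
  assumes P: "((\<lambda>(a, b). f a b) has_derivative P) (at (a, b))"
  shows "((\<lambda>a'. f a' b) has_real_derivative P (1, 0)) (at a)"
    and "((\<lambda>b'. f a b') has_real_derivative P (0, 1)) (at b)"
proof -
  have lin: "linear P" using P by (rule has_derivative_linear)
  have "((\<lambda>a'. (a', b)) has_derivative (\<lambda>h. (h, 0))) (at a)"
    by (auto intro!: derivative_eq_intros)
  from has_derivative_compose[OF this P]
  have "((\<lambda>a'. f a' b) has_derivative (\<lambda>h. P (h, 0))) (at a)" by simp
  moreover have "(\<lambda>h. P (h, 0)) = (*) (P (1, 0))"
  proof
    show "P (h, 0) = P (1, 0) * h" for h
      using linear_scale[OF lin, of h "(1, 0)"] by simp
  qed
  ultimately show "((\<lambda>a'. f a' b) has_real_derivative P (1, 0)) (at a)"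
    unfolding has_field_derivative_def by simp
  have "((\<lambda>b'. (a, b')) has_derivative (\<lambda>h. (0, h))) (at b)"
    by (auto intro!: derivative_eq_intros)
  from has_derivative_compose[OF this P]
  have "((\<lambda>b'. f a b') has_derivative (\<lambda>h. P (0, h))) (at b)" by simp
  moreover have "(\<lambda>h. P (0, h)) = (*) (P (0, 1))"
  proof
    show "P (0, h) = P (0, 1) * h" for h
      using linear_scale[OF lin, of h "(0, 1)"] by simp
  qed
  ultimately show "((\<lambda>b'. f a b') has_real_derivative P (0, 1)) (at b)"
    unfolding has_field_derivative_def by simp
qed

lemma DERIV_bivariate_chain:
  fixes f :: "real \<Rightarrow> real \<Rightarrow> real"
  assumes f: "(\<lambda>(a, b). f a b) differentiable (at (g t, k t))"
    and g: "(g has_real_derivative g') (at t)"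
    and k: "(k has_real_derivative k') (at t)"
  shows "((\<lambda>t. f (g t) (k t)) has_real_derivative
           deriv (\<lambda>a. f a (k t)) (g t) * g' + deriv (\<lambda>b. f (g t) b) (k t) * k') (at t)"
proof -
  obtain P where P: "((\<lambda>(a, b). f a b) has_derivative P) (at (g t, k t))"
    using f unfolding differentiable_def by blast
  have lin: "linear P" using P by (rule has_derivative_linear)
  have partials: "deriv (\<lambda>a. f a (k t)) (g t) = P (1, 0)" "deriv (\<lambda>b. f (g t) b) (k t) = P (0, 1)"
    using has_derivative_imp_partial_derivs[OF P] by (auto intro: DERIV_imp_deriv)
  have "((\<lambda>t. (g t, k t)) has_derivative (\<lambda>h. (g' * h, k' * h))) (at t)"
    using g k unfolding has_field_derivative_def by (rule has_derivative_Pair)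
  from has_derivative_compose[OF this P]
  have "((\<lambda>t. f (g t) (k t)) has_derivative (\<lambda>h. P (g' * h, k' * h))) (at t)" by simp
  moreover have "(\<lambda>h. P (g' * h, k' * h)) = (*) (P (1, 0) * g' + P (0, 1) * k')"
  proof
    fix h
    have "P (g' * h, k' * h) = P ((g' * h) *\<^sub>R (1, 0) + (k' * h) *\<^sub>R (0, 1))" by simp
    also have "\<dots> = (g' * h) * P (1, 0) + (k' * h) * P (0, 1)"
      by (simp only: linear_add[OF lin] linear_scale[OF lin] real_scaleR_def)
    finally show "P (g' * h, k' * h) = (P (1, 0) * g' + P (0, 1) * k') * h"
      by (simp add: algebra_simps)
  qed
  ultimately show ?thesis
    unfolding has_field_derivative_def partials by simp
qed

definition mpnn_sens :: "(nat \<Rightarrow> real \<Rightarrow> real \<Rightarrow> real) \<Rightarrow> (nat \<Rightarrow> real \<Rightarrow> real \<Rightarrow> real)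
    \<Rightarrow> real^'v^'v \<Rightarrow> nat \<Rightarrow> ('v::finite \<Rightarrow> real) \<Rightarrow> 'v \<Rightarrow> 'v \<Rightarrow> real" where
  "mpnn_sens phi psi M l x s v = deriv (\<lambda>t. mpnn phi psi M l (x(s := t)) v) (x s)"

lemma mpnn_0_has_real_derivative:
  "((\<lambda>t. mpnn phi psi M 0 (x(s := t)) v) has_real_derivative (if v = s then 1 else 0)) (at (x s))"
  by (cases "v = s") (auto intro!: derivative_eq_intros)

lemma mpnn_sens_0: "mpnn_sens phi psi M 0 x s v = (if v = s then 1 else 0)"
  unfolding mpnn_sens_def by (rule DERIV_imp_deriv[OF mpnn_0_has_real_derivative])

lemma mpnn_fun_upd_far:
  assumes supp: "\<And>v u. M $ v $ u \<noteq> 0 \<Longrightarrow> E v u \<or> u = v"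
    and far: "\<forall>n\<le>l. \<not> walk E n v s"
  shows "mpnn phi psi M l (x(s := t)) v = mpnn phi psi M l x v"
  using far
proof (induction l arbitrary: v)
  case 0
  then show ?case by simp
next
  case (Suc l)
  have near: "mpnn phi psi M l (x(s := t)) u = mpnn phi psi M l x u" if "E v u \<or> u = v" for u
  proof (rule Suc.IH)
    show "\<forall>n\<le>l. \<not> walk E n u s"
      using that Suc.prems by (auto dest: spec[of _ "Suc _"])
  qed
  have self: "mpnn phi psi M l (x(s := t)) v = mpnn phi psi M l x v"
    by (rule near) simp
  have "(\<Sum>u\<in>UNIV. M $ v $ u * psi l (mpnn phi psi M l x v) (mpnn phi psi M l (x(s := t)) u))
      = (\<Sum>u\<in>UNIV. M $ v $ u * psi l (mpnn phi psi M l x v) (mpnn phi psi M l x u))"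
    using near supp by (intro sum.cong refl) (metis mult_zero_left)
  then show ?case by (simp only: mpnn.simps self)
qed

lemma mpnn_sens_far:
  assumes "\<And>v u. M $ v $ u \<noteq> 0 \<Longrightarrow> E v u \<or> u = v"
    and "\<forall>n\<le>l. \<not> walk E n v s"
  shows "mpnn_sens phi psi M l x s v = 0"
proof -
  have "(\<lambda>t. mpnn phi psi M l (x(s := t)) v) = (\<lambda>t. mpnn phi psi M l x v)"
    using mpnn_fun_upd_far[OF assms] by blast
  then show ?thesis unfolding mpnn_sens_def by simp
qed

context
  fixes phi psi :: "nat \<Rightarrow> real \<Rightarrow> real \<Rightarrow> real"
  assumes phi_diff: "\<And>l p. (\<lambda>(a, b). phi l a b) differentiable (at p)"
    and psi_diff: "\<And>l p. (\<lambda>(a, b). psi l a b) differentiable (at p)"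
begin

lemma mpnn_Suc_has_real_derivative:
  fixes M :: "real^'v^'v" and x :: "'v::finite \<Rightarrow> real" and l :: nat
  defines "h \<equiv> mpnn phi psi M l x"
  assumes D: "\<And>u. ((\<lambda>t. mpnn phi psi M l (x(s := t)) u) has_real_derivative D u) (at (x s))"
  shows "((\<lambda>t. mpnn phi psi M (Suc l) (x(s := t)) v) has_real_derivative
      deriv (\<lambda>a. phi l a (\<Sum>u\<in>UNIV. M $ v $ u * psi l (h v) (h u))) (h v) * D v
      + deriv (\<lambda>b. phi l (h v) b) (\<Sum>u\<in>UNIV. M $ v $ u * psi l (h v) (h u)) *
        (\<Sum>u\<in>UNIV. M $ v $ u * (deriv (\<lambda>a. psi l a (h u)) (h v) * D v
                              + deriv (\<lambda>b. psi l (h v) b) (h u) * D u))) (at (x s))"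
proof -
  have "((\<lambda>t. M $ v $ u *
            psi l (mpnn phi psi M l (x(s := t)) v) (mpnn phi psi M l (x(s := t)) u))
        has_real_derivative M $ v $ u * (deriv (\<lambda>a. psi l a (h u)) (h v) * D v
                                + deriv (\<lambda>b. psi l (h v) b) (h u) * D u)) (at (x s))" for u
    using DERIV_cmult[OF DERIV_bivariate_chain[OF psi_diff D D]] unfolding h_def fun_upd_triv .
  then have "((\<lambda>t. \<Sum>u\<in>UNIV. M $ v $ u *
            psi l (mpnn phi psi M l (x(s := t)) v) (mpnn phi psi M l (x(s := t)) u))
        has_real_derivative
          (\<Sum>u\<in>UNIV. M $ v $ u * (deriv (\<lambda>a. psi l a (h u)) (h v) * D v
                                + deriv (\<lambda>b. psi l (h v) b) (h u) * D u))) (at (x s))"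
    by (rule DERIV_sum)
  from DERIV_bivariate_chain[where f = "phi l", OF phi_diff D[of v] this]
  show ?thesis unfolding h_def fun_upd_triv mpnn.simps(2) .
qed

lemma mpnn_has_sens:
  "((\<lambda>t. mpnn phi psi M l (x(s := t)) v) has_real_derivative mpnn_sens phi psi M l x s v) (at (x s))"
proof (induction l arbitrary: v)
  case 0
  show ?case
    unfolding mpnn_sens_def DERIV_deriv_iff_real_differentiable real_differentiable_def
    using mpnn_0_has_real_derivative by blast
next
  case (Suc l)
  show ?case
    unfolding mpnn_sens_def[of _ _ _ "Suc l"] DERIV_deriv_iff_real_differentiable
      real_differentiable_def
    using mpnn_Suc_has_real_derivative[OF Suc.IH] by blast
qed

lemma mpnn_sens_Suc:
  fixes M :: "real^'v^'v" and x :: "'v::finite \<Rightarrow> real" and l :: nat and s :: 'v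
  defines "h \<equiv> mpnn phi psi M l x" and "D \<equiv> mpnn_sens phi psi M l x s"
  shows "mpnn_sens phi psi M (Suc l) x s v =
      deriv (\<lambda>a. phi l a (\<Sum>u\<in>UNIV. M $ v $ u * psi l (h v) (h u))) (h v) * D v
      + deriv (\<lambda>b. phi l (h v) b) (\<Sum>u\<in>UNIV. M $ v $ u * psi l (h v) (h u)) *
        (\<Sum>u\<in>UNIV. M $ v $ u * (deriv (\<lambda>a. psi l a (h u)) (h v) * D v
                              + deriv (\<lambda>b. psi l (h v) b) (h u) * D u))"
  unfolding mpnn_sens_def[of _ _ _ "Suc l"] h_def D_def
  by (rule DERIV_imp_deriv[OF mpnn_Suc_has_real_derivative[OF mpnn_has_sens]])

lemma mpnn_sens_bound:
  fixes M :: "real^'v^'v" and x :: "'v::finite \<Rightarrow> real"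
  assumes supp: "\<And>v u. M $ v $ u \<noteq> 0 \<Longrightarrow> E v u \<or> u = v"
    and nonneg: "\<And>v u. 0 \<le> M $ v $ u"
    and phi_bound: "\<And>j a b. j < l \<Longrightarrow> \<bar>deriv (\<lambda>t. phi j a t) b\<bar> \<le> \<alpha>"
    and psi_bound: "\<And>j a b. j < l \<Longrightarrow> \<bar>deriv (\<lambda>t. psi j a t) b\<bar> \<le> \<beta>"
    and far: "\<forall>n<l. \<not> walk E n v s"
  shows "\<bar>mpnn_sens phi psi M l x s v\<bar> \<le> (\<alpha> * \<beta>) ^ l * matpow M l $ v $ s"
  using phi_bound psi_bound far
proof (induction l arbitrary: v)
  case 0
  then show ?case by (simp add: mpnn_sens_0 matpow_def mat_def)
next
  case (Suc l)
  define h where "h = mpnn phi psi M l x"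
  define D where "D = mpnn_sens phi psi M l x s"
  define c where "c u = deriv (\<lambda>b. psi l (h v) b) (h u)" for u
  define a where "a = deriv (\<lambda>b. phi l (h v) b) (\<Sum>u\<in>UNIV. M $ v $ u * psi l (h v) (h u))"
  have "D v = 0"
    unfolding D_def using Suc.prems(3) by (intro mpnn_sens_far[OF supp]) auto
  then have sens_Suc: "mpnn_sens phi psi M (Suc l) x s v = a * (\<Sum>u\<in>UNIV. M $ v $ u * (c u * D u))"
    by (simp add: mpnn_sens_Suc h_def D_def a_def c_def)
  have "0 \<le> \<alpha>" "0 \<le> \<beta>"
    using Suc.prems(1)[of l 0 0] Suc.prems(2)[of l 0 0] by linarith+
  have term_bound: "\<bar>M $ v $ u * (c u * D u)\<bar> \<le> M $ v $ u * (\<beta> * ((\<alpha> * \<beta>) ^ l * matpow M l $ u $ s))"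
    for u
  proof (cases "M $ v $ u = 0")
    case False
    then have "E v u \<or> u = v" by (rule supp)
    then have "\<forall>n<l. \<not> walk E n u s"
      using Suc.prems(3) by (auto dest: spec[of _ "Suc _"])
    then have "\<bar>D u\<bar> \<le> (\<alpha> * \<beta>) ^ l * matpow M l $ u $ s"
      unfolding D_def using Suc.prems(1,2) by (intro Suc.IH) auto
    moreover have "\<bar>c u\<bar> \<le> \<beta>" unfolding c_def using Suc.prems(2) by simp
    ultimately have "\<bar>c u * D u\<bar> \<le> \<beta> * ((\<alpha> * \<beta>) ^ l * matpow M l $ u $ s)"
      unfolding abs_mult using \<open>0 \<le> \<beta>\<close> by (intro mult_mono) auto
    then show ?thesis using nonneg[of v u] by (simp add: abs_mult mult_left_mono)
  qed simp
  have "\<bar>mpnn_sens phi psi M (Suc l) x s v\<bar> = \<bar>a\<bar> * \<bar>\<Sum>u\<in>UNIV. M $ v $ u * (c u * D u)\<bar>"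
    by (simp add: sens_Suc abs_mult)
  also have "\<dots> \<le> \<alpha> * (\<Sum>u\<in>UNIV. M $ v $ u * (\<beta> * ((\<alpha> * \<beta>) ^ l * matpow M l $ u $ s)))"
  proof (rule mult_mono)
    show "\<bar>a\<bar> \<le> \<alpha>" unfolding a_def using Suc.prems(1) by simp
    show "\<bar>\<Sum>u\<in>UNIV. M $ v $ u * (c u * D u)\<bar>
        \<le> (\<Sum>u\<in>UNIV. M $ v $ u * (\<beta> * ((\<alpha> * \<beta>) ^ l * matpow M l $ u $ s)))"
      using sum_abs term_bound by (rule order_trans[OF _ sum_mono])
  qed (use \<open>0 \<le> \<alpha>\<close> in auto)
  also have "\<dots> = (\<alpha> * \<beta>) ^ Suc l * matpow M (Suc l) $ v $ s"
    by (simp add: matpow_Suc matrix_matrix_mult_def sum_distrib_left algebra_simps)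
  finally show ?case .
qed

end

theorem lemma1:
  fixes E :: "'v::finite \<Rightarrow> 'v \<Rightarrow> bool"
    and phi psi :: "nat \<Rightarrow> real \<Rightarrow> real \<Rightarrow> real"
    and x :: "'v \<Rightarrow> real" and i s :: 'v and r :: nat and \<alpha> \<beta> :: real
  assumes sym: "\<And>u v. E u v \<Longrightarrow> E v u"
    and irrefl: "\<And>v. \<not> E v v"
    and phi_diff: "\<And>l p. (\<lambda>(a, b). phi l a b) differentiable (at p)"
    and psi_diff: "\<And>l p. (\<lambda>(a, b). psi l a b) differentiable (at p)"
    and s_sphere: "s \<in> sphere_G E (r + 1) i"
    and phi_bound: "\<And>l a b. l \<le> r \<Longrightarrow>
        \<bar>deriv (\<lambda>t. phi l t b) a\<bar> \<le> \<alpha> \<and> \<bar>deriv (\<lambda>t. phi l a t) b\<bar> \<le> \<alpha>"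
    and psi_bound: "\<And>l a b. l \<le> r \<Longrightarrow>
        \<bar>deriv (\<lambda>t. psi l t b) a\<bar> \<le> \<beta> \<and> \<bar>deriv (\<lambda>t. psi l a t) b\<bar> \<le> \<beta>"
  shows "\<bar>deriv (\<lambda>t. mpnn phi psi (adj_hat E) (r + 1) (x(s := t)) i) (x s)\<bar>
           \<le> (\<alpha> * \<beta>) ^ (r + 1) * (matpow (adj_hat E) (r + 1)) $ i $ s"
proof -
  have "\<bar>mpnn_sens phi psi (adj_hat E) (r + 1) x s i\<bar>
      \<le> (\<alpha> * \<beta>) ^ (r + 1) * matpow (adj_hat E) (r + 1) $ i $ s"
  proof (rule mpnn_sens_bound[OF phi_diff psi_diff])
    show "adj_hat E $ v $ u \<noteq> 0 \<Longrightarrow> E v u \<or> u = v" for u v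
      by (rule adj_hat_nonzero_imp_adjacent_or_eq)
    show "0 \<le> adj_hat E $ v $ u" for u v
      by (rule adj_hat_nonneg)
    show "\<bar>deriv (\<lambda>t. phi j a t) b\<bar> \<le> \<alpha>" if "j < r + 1" for j a b
      using phi_bound[where l = j and a = a and b = b] that by simp
    show "\<bar>deriv (\<lambda>t. psi j a t) b\<bar> \<le> \<beta>" if "j < r + 1" for j a b
      using psi_bound[where l = j and a = a and b = b] that by simp
    show "\<forall>n<r + 1. \<not> walk E n i s"
      using sphere_G_imp_not_walk[OF s_sphere] by simp
  qed
  then show ?thesis unfolding mpnn_sens_def .
qed

end
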